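(* Let $K=\bigoplus_{p,q\ge0}K^{pq}$ be a double complex of Abelian topological groups with continuous differentials $d':K^{pq}\to K^{p+1,q}$, $d'':K^{pq}\to K^{p,q+1}$ satisfying $(d'+d'')^2=0$. Suppose that $d'':K^{pq}\to Z^{p,q+1}_{II}(K)$ is open for all $p,q\ge0$. Then the zero homomorphism $0^\bullet\to K^\bullet/K_I^\bullet$, and hence the inclusion $K_I^\bullet\to K^\bullet$, are quasi-open. In particular $H^n(K_I^\bullet)\to H^n(K^\bullet)$ is open for $n\ge0$.
   Context: $K^\bullet$ is the total complex: $K^n=\bigoplus_{p+q=n}K^{pq}$ (product topology; $K^n=0$ for $n<0$) with differential $d=d'+d''$. $Z^{pq}_{II}(K)=\ker(d''|K^{pq})$ with the subspace topology. $K_I$ is the subcomplex with $K_I^{pq}=0$ for $q>0$ and $K_I^{p0}=Z^{p0}_{II}(K)$, so $K_I^n=K_I^{n0}$ with differential $d'$. Cohomology groups carry the quotient topologies of cycles (subspace topology) by boundaries; $K^\bullet/K_I^\bullet$ has the quotient topology. For a homomorphism $\varphi:A^\bullet\to B^\bullet$ of complexes of Abelian topological groups, $\varphi$ is quasi-open if for every $n$ the map $\ker(d_A|A^n)\oplus B^{n-1}\to\ker(d_B|B^n)$, $(a,b)\mapsto\varphi a-d_Bb$, is open. *)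

theory Defs
  imports "HOL-Analysis.Analysis"
begin

text \<open>A complex: in each degree n a topological space (whose point set is the group A^n),
  the group operations of degree n, and the differential d : A^n \<rightarrow> A^(n+1).\<close>

record 'x tcomplex =
  ctop  :: "int \<Rightarrow> 'x topology"
  czero :: "int \<Rightarrow> 'x"
  cadd  :: "int \<Rightarrow> 'x \<Rightarrow> 'x \<Rightarrow> 'x"
  cneg  :: "int \<Rightarrow> 'x \<Rightarrow> 'x"
  cdiff :: "int \<Rightarrow> 'x \<Rightarrow> 'x"

definition quotient_topology :: "'x topology \<Rightarrow> ('x \<Rightarrow> 'c) \<Rightarrow> 'c topology" where
  "quotient_topology X q =
     topology (\<lambda>U. U \<subseteq> q ` topspace X \<and> openin X {x \<in> topspace X. q x \<in> U})"

definition cycles :: "'x tcomplex \<Rightarrow> int \<Rightarrow> 'x set" where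
  "cycles A n = {x \<in> topspace (ctop A n). cdiff A n x = czero A (n+1)}"

definition cycles_top :: "'x tcomplex \<Rightarrow> int \<Rightarrow> 'x topology" where
  "cycles_top A n = subtopology (ctop A n) (cycles A n)"

definition boundaries :: "'x tcomplex \<Rightarrow> int \<Rightarrow> 'x set" where
  "boundaries A n = cdiff A (n-1) ` topspace (ctop A (n-1))"

definition hclass :: "'x tcomplex \<Rightarrow> int \<Rightarrow> 'x \<Rightarrow> 'x set" where
  "hclass A n x = {y \<in> cycles A n. cadd A n y (cneg A n x) \<in> boundaries A n}"

definition coh_top :: "'x tcomplex \<Rightarrow> int \<Rightarrow> 'x set topology" where
  "coh_top A n = quotient_topology (cycles_top A n) (hclass A n)"

definition coh_map :: "'y tcomplex \<Rightarrow> (int \<Rightarrow> 'x \<Rightarrow> 'y) \<Rightarrow> int \<Rightarrow> 'x set \<Rightarrow> 'y set" where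
  "coh_map B phi n c = hclass B n (phi n (SOME x. x \<in> c))"

definition quasi_open :: "'x tcomplex \<Rightarrow> 'y tcomplex \<Rightarrow> (int \<Rightarrow> 'x \<Rightarrow> 'y) \<Rightarrow> bool" where
  "quasi_open A B phi \<longleftrightarrow>
     (\<forall>n. open_map (prod_topology (cycles_top A n) (ctop B (n-1))) (cycles_top B n)
            (\<lambda>(a,b). cadd B n (phi n a) (cneg B n (cdiff B (n-1) b))))"

definition zero_complex :: "unit tcomplex" where
  "zero_complex = \<lparr>ctop = (\<lambda>n. discrete_topology {()}), czero = (\<lambda>n. ()),
     cadd = (\<lambda>n x y. ()), cneg = (\<lambda>n x. ()), cdiff = (\<lambda>n x. ())\<rparr>"

definition qcoset :: "'x tcomplex \<Rightarrow> (int \<Rightarrow> 'x set) \<Rightarrow> int \<Rightarrow> 'x \<Rightarrow> 'x set" where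
  "qcoset A S n x = {y \<in> topspace (ctop A n). cadd A n y (cneg A n x) \<in> S n}"

definition quotient_complex :: "'x tcomplex \<Rightarrow> (int \<Rightarrow> 'x set) \<Rightarrow> 'x set tcomplex" where
  "quotient_complex A S =
    \<lparr>ctop = (\<lambda>n. quotient_topology (ctop A n) (qcoset A S n)),
     czero = (\<lambda>n. qcoset A S n (czero A n)),
     cadd = (\<lambda>n c1 c2. qcoset A S n (cadd A n (SOME x. x \<in> c1) (SOME x. x \<in> c2))),
     cneg = (\<lambda>n c. qcoset A S n (cneg A n (SOME x. x \<in> c))),
     cdiff = (\<lambda>n c. qcoset A S (n+1) (cdiff A n (SOME x. x \<in> c)))\<rparr>"

text \<open>K^{pq} is the topological space T p q (carrier = topspace), a subgroup of the ambient
  abelian group 'a; d' p q : K^{pq} \<rightarrow> K^{p+1,q}, d'' p q : K^{pq} \<rightarrow> K^{p,q+1}.\<close>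

definition double_complex ::
  "(nat \<Rightarrow> nat \<Rightarrow> 'a::ab_group_add topology) \<Rightarrow> (nat \<Rightarrow> nat \<Rightarrow> 'a \<Rightarrow> 'a) \<Rightarrow> (nat \<Rightarrow> nat \<Rightarrow> 'a \<Rightarrow> 'a) \<Rightarrow> bool"
where
  "double_complex T d' d'' \<longleftrightarrow>
    (\<forall>p q. 0 \<in> topspace (T p q)
       \<and> (\<forall>x\<in>topspace (T p q). \<forall>y\<in>topspace (T p q). x + y \<in> topspace (T p q))
       \<and> (\<forall>x\<in>topspace (T p q). - x \<in> topspace (T p q))
       \<and> continuous_map (prod_topology (T p q) (T p q)) (T p q) (\<lambda>(x,y). x + y)
       \<and> continuous_map (T p q) (T p q) uminus
       \<and> continuous_map (T p q) (T (Suc p) q) (d' p q)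
       \<and> continuous_map (T p q) (T p (Suc q)) (d'' p q)
       \<and> (\<forall>x\<in>topspace (T p q). \<forall>y\<in>topspace (T p q). d' p q (x + y) = d' p q x + d' p q y)
       \<and> (\<forall>x\<in>topspace (T p q). \<forall>y\<in>topspace (T p q). d'' p q (x + y) = d'' p q x + d'' p q y)
       \<and> (\<forall>x\<in>topspace (T p q). d' (Suc p) q (d' p q x) = 0)
       \<and> (\<forall>x\<in>topspace (T p q). d'' p (Suc q) (d'' p q x) = 0)
       \<and> (\<forall>x\<in>topspace (T p q). d' p (Suc q) (d'' p q x) + d'' (Suc p) q (d' p q x) = 0))"

definition ZII :: "(nat \<Rightarrow> nat \<Rightarrow> 'a::ab_group_add topology) \<Rightarrow> (nat \<Rightarrow> nat \<Rightarrow> 'a \<Rightarrow> 'a) \<Rightarrow> nat \<Rightarrow> nat \<Rightarrow> 'a set" where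
  "ZII T d'' p q = {x \<in> topspace (T p q). d'' p q x = 0}"

text \<open>Total complex: an element of K^n is a function p \<mapsto> its component in K^{p,n-p}
  (zero for p > n; everything zero for n < 0); product topology.\<close>
definition total_complex ::
  "(nat \<Rightarrow> nat \<Rightarrow> 'a::ab_group_add topology) \<Rightarrow> (nat \<Rightarrow> nat \<Rightarrow> 'a \<Rightarrow> 'a) \<Rightarrow> (nat \<Rightarrow> nat \<Rightarrow> 'a \<Rightarrow> 'a)
   \<Rightarrow> (nat \<Rightarrow> 'a) tcomplex"
where
  "total_complex T d' d'' =
    \<lparr>ctop = (\<lambda>n. product_topology
                  (\<lambda>p. if int p \<le> n then T p (nat (n - int p)) else discrete_topology {0}) UNIV),
     czero = (\<lambda>n. (\<lambda>p. 0)),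
     cadd = (\<lambda>n f g. (\<lambda>p. f p + g p)),
     cneg = (\<lambda>n f. (\<lambda>p. - f p)),
     cdiff = (\<lambda>n f. (\<lambda>p. if int p \<le> n + 1 then
                (if 1 \<le> p then d' (p - 1) (nat (n + 1 - int p)) (f (p - 1)) else 0)
              + (if int p \<le> n then d'' p (nat (n - int p)) (f p) else 0)
              else 0))\<rparr>"

text \<open>K_I^n = K_I^{n0} = Z^{n0}_{II}(K), viewed inside K^n (subspace topology).\<close>
definition KI_set ::
  "(nat \<Rightarrow> nat \<Rightarrow> 'a::ab_group_add topology) \<Rightarrow> (nat \<Rightarrow> nat \<Rightarrow> 'a \<Rightarrow> 'a) \<Rightarrow> (nat \<Rightarrow> nat \<Rightarrow> 'a \<Rightarrow> 'a)
   \<Rightarrow> int \<Rightarrow> (nat \<Rightarrow> 'a) set"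
where
  "KI_set T d' d'' n =
     {f \<in> topspace (ctop (total_complex T d' d'') n).
        (\<forall>p. int p \<noteq> n \<longrightarrow> f p = 0) \<and> (0 \<le> n \<longrightarrow> f (nat n) \<in> ZII T d'' (nat n) 0)}"

definition KI_complex ::
  "(nat \<Rightarrow> nat \<Rightarrow> 'a::ab_group_add topology) \<Rightarrow> (nat \<Rightarrow> nat \<Rightarrow> 'a \<Rightarrow> 'a) \<Rightarrow> (nat \<Rightarrow> nat \<Rightarrow> 'a \<Rightarrow> 'a)
   \<Rightarrow> (nat \<Rightarrow> 'a) tcomplex"
where
  "KI_complex T d' d'' =
     (total_complex T d' d'')\<lparr>ctop := (\<lambda>n. subtopology (ctop (total_complex T d' d'') n) (KI_set T d' d'' n))\<rparr>"

end

theory Submission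
  imports Defs "HOL-Library.Function_Algebras"
begin

lemma openin_prod_topologyE:
  assumes "openin (prod_topology X Y) S" "(x, y) \<in> S"
  obtains U V where "openin X U" "openin Y V" "x \<in> U" "y \<in> V" "U \<times> V \<subseteq> S"
  using assms(1)[unfolded openin_prod_topology_alt, rule_format, OF assms(2)] by blast

lemma open_map_prod_topologyI:
  assumes "\<And>a b U V. openin X U \<Longrightarrow> a \<in> U \<Longrightarrow> openin Y V \<Longrightarrow> b \<in> V \<Longrightarrow>
    \<exists>W. openin Z W \<and> f (a, b) \<in> W \<and> W \<subseteq> f ` (U \<times> V)"
  shows "open_map (prod_topology X Y) Z f"
  unfolding open_map_def
proof (intro allI impI)
  fix G assume G: "openin (prod_topology X Y) G"
  show "openin Z (f ` G)"
  proof (rule openin_subopen[THEN iffD2], intro ballI)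
    fix w assume "w \<in> f ` G"
    then obtain a b where ab: "(a, b) \<in> G" "w = f (a, b)"
      by auto
    obtain U V where UV: "openin X U" "openin Y V" "a \<in> U" "b \<in> V" "U \<times> V \<subseteq> G"
      using G ab(1) by (rule openin_prod_topologyE)
    from assms[OF UV(1,3,2,4)] obtain W where W: "openin Z W" "f (a, b) \<in> W" "W \<subseteq> f ` (U \<times> V)"
      by blast
    have "W \<subseteq> f ` G"
      using W(3) image_mono[OF UV(5)] by (rule subset_trans)
    then show "\<exists>W. openin Z W \<and> w \<in> W \<and> W \<subseteq> f ` G"
      using W(1,2) ab(2) by blast
  qed
qed

definition ab_topgroup :: "'a::ab_group_add topology \<Rightarrow> bool" where
  "ab_topgroup X \<longleftrightarrow> 0 \<in> topspace X
     \<and> (\<forall>x\<in>topspace X. \<forall>y\<in>topspace X. x + y \<in> topspace X)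
     \<and> (\<forall>x\<in>topspace X. - x \<in> topspace X)
     \<and> continuous_map (prod_topology X X) X (\<lambda>(x,y). x + y)
     \<and> continuous_map X X uminus"

context
  fixes X :: "'a::ab_group_add topology"
  assumes G: "ab_topgroup X"
begin

lemma ab_topgroup_zero: "0 \<in> topspace X"
  and ab_topgroup_add: "x \<in> topspace X \<Longrightarrow> y \<in> topspace X \<Longrightarrow> x + y \<in> topspace X"
  and ab_topgroup_uminus: "x \<in> topspace X \<Longrightarrow> - x \<in> topspace X"
  using G by (auto simp: ab_topgroup_def)

lemma ab_topgroup_diff: "x \<in> topspace X \<Longrightarrow> y \<in> topspace X \<Longrightarrow> x - y \<in> topspace X"
  using ab_topgroup_add ab_topgroup_uminus by (metis diff_conv_add_uminus)

lemma continuous_map_ab_topgroup_add: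
  assumes "continuous_map Y X f" "continuous_map Y X g"
  shows "continuous_map Y X (\<lambda>y. f y + g y)"
proof -
  have "continuous_map (prod_topology X X) X (\<lambda>(x,y). x + y)"
    using G by (simp add: ab_topgroup_def)
  from continuous_map_compose[OF continuous_map_pairedI[OF assms] this]
  show ?thesis by (simp add: o_def)
qed

lemma continuous_map_ab_topgroup_uminus:
  assumes "continuous_map Y X f"
  shows "continuous_map Y X (\<lambda>y. - f y)"
proof -
  have "continuous_map X X uminus"
    using G by (simp add: ab_topgroup_def)
  from continuous_map_compose[OF assms this] show ?thesis by (simp add: o_def)
qed

lemma continuous_map_ab_topgroup_diff:
  assumes "continuous_map Y X f" "continuous_map Y X g"
  shows "continuous_map Y X (\<lambda>y. f y - g y)"
  using continuous_map_ab_topgroup_add[OF assms(1) continuous_map_ab_topgroup_uminus[OF assms(2)]]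
  by simp

lemma continuous_map_ab_topgroup_translate:
  assumes "c \<in> topspace X"
  shows "continuous_map X X (\<lambda>y. y + c)"
proof (rule continuous_map_ab_topgroup_add)
  show "continuous_map X X (\<lambda>y. y)"
    using continuous_map_id by (simp add: id_def)
  show "continuous_map X X (\<lambda>y. c)"
    using assms by simp
qed

lemma openin_ab_topgroup_translate:
  assumes "openin X U" "c \<in> topspace X"
  shows "openin X {y \<in> topspace X. y + c \<in> U}"
  using openin_continuous_map_preimage[OF continuous_map_ab_topgroup_translate[OF assms(2)] assms(1)]
  by simp

lemma openin_ab_topgroup_reflect:
  assumes "openin X U" "c \<in> topspace X"
  shows "openin X {y \<in> topspace X. c - y \<in> U}"
proof -
  have "continuous_map X X (\<lambda>y. c - y)"
  proof (rule continuous_map_ab_topgroup_diff)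
    show "continuous_map X X (\<lambda>y. y)"
      using continuous_map_id by (simp add: id_def)
    show "continuous_map X X (\<lambda>y. c)"
      using assms(2) by simp
  qed
  then show ?thesis
    using assms(1) by (rule openin_continuous_map_preimage)
qed

lemma ab_topgroup_small_nbhd:
  assumes "openin X W" "0 \<in> W"
  obtains A where "openin X A" "0 \<in> A" "\<And>x y. x \<in> A \<Longrightarrow> y \<in> A \<Longrightarrow> x + y \<in> W \<and> x - y \<in> W"
proof -
  define Z where "Z = {z \<in> topspace (prod_topology X X). fst z + snd z \<in> W}
    \<inter> {z \<in> topspace (prod_topology X X). fst z - snd z \<in> W}"
  have fst: "continuous_map (prod_topology X X) X fst"
    and snd: "continuous_map (prod_topology X X) X snd"
    by (simp_all add: continuous_map_fst continuous_map_snd)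
  have "openin (prod_topology X X) {z \<in> topspace (prod_topology X X). fst z + snd z \<in> W}"
    using openin_continuous_map_preimage[OF continuous_map_ab_topgroup_add[OF fst snd] assms(1)]
    by simp
  moreover have "openin (prod_topology X X) {z \<in> topspace (prod_topology X X). fst z - snd z \<in> W}"
    using openin_continuous_map_preimage[OF continuous_map_ab_topgroup_diff[OF fst snd] assms(1)]
    by simp
  ultimately have "openin (prod_topology X X) Z"
    unfolding Z_def by (rule openin_Int)
  moreover have "(0, 0) \<in> Z"
    unfolding Z_def using assms(2) ab_topgroup_zero by simp
  ultimately obtain U V where UV: "openin X U" "openin X V" "0 \<in> U" "0 \<in> V" "U \<times> V \<subseteq> Z"
    by (rule openin_prod_topologyE)
  show thesis
  proof (rule that[of "U \<inter> V"])
    show "openin X (U \<inter> V)"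
      using UV(1,2) by (rule openin_Int)
    show "0 \<in> U \<inter> V"
      using UV(3,4) by blast
    fix x y assume "x \<in> U \<inter> V" "y \<in> U \<inter> V"
    then have "(x, y) \<in> Z" using UV(5) by blast
    then show "x + y \<in> W \<and> x - y \<in> W" by (simp add: Z_def)
  qed
qed

lemma open_map_coset:
  assumes S: "S \<subseteq> topspace X" "\<And>s. s \<in> S \<Longrightarrow> - s \<in> S"
    and W: "openin X W"
  shows "openin X {y \<in> topspace X. \<exists>s\<in>S. y - s \<in> W}"
proof -
  have "{y \<in> topspace X. \<exists>s\<in>S. y - s \<in> W} = (\<Union>s\<in>S. {y \<in> topspace X. y + - s \<in> W})"
    by auto
  moreover have "openin X {y \<in> topspace X. y + - s \<in> W}" if "s \<in> S" for s
    using openin_ab_topgroup_translate[OF W ab_topgroup_uminus] that S(1) by blast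
  ultimately show ?thesis by auto
qed

end

lemma ab_topgroup_discrete_zero: "ab_topgroup (discrete_topology {0})"
  by (auto simp: ab_topgroup_def simp flip: prod_topology_discrete_topology)

lemma ab_topgroup_product:
  assumes "\<And>i. ab_topgroup (X i)"
  shows "ab_topgroup (product_topology X UNIV)"
proof -
  have proj: "continuous_map (product_topology X UNIV) (X i) (\<lambda>f. f i)" for i
    by (rule continuous_map_product_projection) simp
  have "continuous_map (prod_topology (product_topology X UNIV) (product_topology X UNIV))
      (X i) (\<lambda>z. fst z i + snd z i)" for i
    using assms by (intro continuous_map_ab_topgroup_add
        continuous_map_compose[OF continuous_map_fst proj, unfolded o_def]
        continuous_map_compose[OF continuous_map_snd proj, unfolded o_def])
  moreover have "continuous_map (product_topology X UNIV) (X i) (\<lambda>f. - f i)" for i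
    using assms proj by (intro continuous_map_ab_topgroup_uminus)
  ultimately have "continuous_map (prod_topology (product_topology X UNIV) (product_topology X UNIV))
      (product_topology X UNIV) (\<lambda>(f,g). f + g)"
    and "continuous_map (product_topology X UNIV) (product_topology X UNIV) uminus"
    by (simp_all add: continuous_map_componentwise_UNIV case_prod_unfold)
  moreover have "0 \<in> topspace (product_topology X UNIV)"
    using ab_topgroup_zero[OF assms] by (simp add: PiE_UNIV_domain)
  moreover have "f + g \<in> topspace (product_topology X UNIV)"
    if "f \<in> topspace (product_topology X UNIV)" "g \<in> topspace (product_topology X UNIV)" for f g
    using that ab_topgroup_add[OF assms] by (simp add: PiE_UNIV_domain Pi_iff)
  moreover have "- f \<in> topspace (product_topology X UNIV)"
    if "f \<in> topspace (product_topology X UNIV)" for f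
    using that ab_topgroup_uminus[OF assms] by (simp add: PiE_UNIV_domain Pi_iff)
  ultimately show ?thesis
    by (simp add: ab_topgroup_def)
qed

lemma openin_quotient_topology:
  "openin (quotient_topology X q) U \<longleftrightarrow> U \<subseteq> q ` topspace X \<and> openin X {x \<in> topspace X. q x \<in> U}"
proof -
  have e1: "\<And>S T. {x \<in> topspace X. q x \<in> S \<inter> T} = {x \<in> topspace X. q x \<in> S} \<inter> {x \<in> topspace X. q x \<in> T}" by auto
  have e2: "\<And>KK. {x \<in> topspace X. q x \<in> \<Union>KK} = \<Union>((\<lambda>S. {x \<in> topspace X. q x \<in> S}) ` KK)" by auto
  have "istopology (\<lambda>U. U \<subseteq> q ` topspace X \<and> openin X {x \<in> topspace X. q x \<in> U})"
    unfolding istopology_def e1 e2 by (auto intro!: openin_Int openin_Union)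
  then show ?thesis unfolding quotient_topology_def by simp
qed

lemma topspace_quotient_topology: "topspace (quotient_topology X q) = q ` topspace X"
proof -
  have e: "{x \<in> topspace X. q x \<in> q ` topspace X} = topspace X" by auto
  have "openin (quotient_topology X q) (q ` topspace X)"
    using e by (simp add: openin_quotient_topology)
  then have 1: "q ` topspace X \<subseteq> topspace (quotient_topology X q)" by (rule openin_subset)
  have "openin (quotient_topology X q) (topspace (quotient_topology X q))" by simp
  then have 2: "topspace (quotient_topology X q) \<subseteq> q ` topspace X" unfolding openin_quotient_topology by blast
  show ?thesis using 1 2 by blast
qed

locale topological_complex =
  fixes A :: "'x::ab_group_add tcomplex"
  assumes ab_topgroup_ctop: "ab_topgroup (ctop A n)"
    and cadd_eq: "cadd A n = (+)"
    and cneg_eq: "cneg A n = uminus"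
    and czero_eq: "czero A n = 0"
    and cdiff_closed: "x \<in> topspace (ctop A n) \<Longrightarrow> cdiff A n x \<in> topspace (ctop A (n + 1))"
    and cdiff_add: "x \<in> topspace (ctop A n) \<Longrightarrow> y \<in> topspace (ctop A n)
      \<Longrightarrow> cdiff A n (x + y) = cdiff A n x + cdiff A n y"
    and cdiff_cdiff: "x \<in> topspace (ctop A n) \<Longrightarrow> cdiff A (n + 1) (cdiff A n x) = 0"
begin

lemma cdiff_closed': "x \<in> topspace (ctop A (n - 1)) \<Longrightarrow> cdiff A (n - 1) x \<in> topspace (ctop A n)"
  using cdiff_closed[of x "n - 1"] by simp

lemma cdiff_cdiff': "x \<in> topspace (ctop A (n - 1)) \<Longrightarrow> cdiff A n (cdiff A (n - 1) x) = 0"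
  using cdiff_cdiff[of x "n - 1"] by simp

lemma cdiff_zero: "cdiff A n 0 = 0"
  using cdiff_add[OF ab_topgroup_zero ab_topgroup_zero, OF ab_topgroup_ctop ab_topgroup_ctop] by simp

lemma cdiff_uminus:
  assumes "x \<in> topspace (ctop A n)"
  shows "cdiff A n (- x) = - cdiff A n x"
proof -
  have "cdiff A n x + cdiff A n (- x) = cdiff A n (x + - x)"
    using cdiff_add[OF assms ab_topgroup_uminus[OF ab_topgroup_ctop assms]] by simp
  then have "cdiff A n x + cdiff A n (- x) = 0"
    by (simp add: cdiff_zero)
  then show ?thesis
    by (metis neg_eq_iff_add_eq_0)
qed

lemma cdiff_diff: "x \<in> topspace (ctop A n) \<Longrightarrow> y \<in> topspace (ctop A n)
    \<Longrightarrow> cdiff A n (x - y) = cdiff A n x - cdiff A n y"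
  using cdiff_add[of x n "- y"] cdiff_uminus[of y n] ab_topgroup_uminus[OF ab_topgroup_ctop]
  by simp

lemma cycles_eq: "cycles A n = {x \<in> topspace (ctop A n). cdiff A n x = 0}"
  by (simp add: cycles_def czero_eq)

lemma boundaries_zero: "0 \<in> boundaries A n"
  unfolding boundaries_def
  using cdiff_zero ab_topgroup_zero[OF ab_topgroup_ctop] by (rule image_eqI[OF sym])

lemma boundaries_add:
  assumes "x \<in> boundaries A n" "y \<in> boundaries A n"
  shows "x + y \<in> boundaries A n"
proof -
  obtain a b where "a \<in> topspace (ctop A (n - 1))" "b \<in> topspace (ctop A (n - 1))"
    "x = cdiff A (n - 1) a" "y = cdiff A (n - 1) b"
    using assms by (auto simp: boundaries_def)
  then show ?thesis
    unfolding boundaries_def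
    by (intro image_eqI[of _ _ "a + b"]) (simp_all add: cdiff_add ab_topgroup_add[OF ab_topgroup_ctop])
qed

lemma boundaries_diff:
  assumes "x \<in> boundaries A n" "y \<in> boundaries A n"
  shows "x - y \<in> boundaries A n"
proof -
  obtain a b where "a \<in> topspace (ctop A (n - 1))" "b \<in> topspace (ctop A (n - 1))"
    "x = cdiff A (n - 1) a" "y = cdiff A (n - 1) b"
    using assms by (auto simp: boundaries_def)
  then show ?thesis
    unfolding boundaries_def
    by (intro image_eqI[of _ _ "a - b"]) (simp_all add: cdiff_diff ab_topgroup_diff[OF ab_topgroup_ctop])
qed

lemma hclass_eq: "hclass A n x = {y \<in> cycles A n. y - x \<in> boundaries A n}"
  by (simp add: hclass_def cadd_eq cneg_eq)

lemma hclass_eqI: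
  assumes "x - y \<in> boundaries A n"
  shows "hclass A n x = hclass A n y"
proof -
  have "z - x \<in> boundaries A n \<longleftrightarrow> z - y \<in> boundaries A n" for z
    using boundaries_add[OF _ assms, of "z - x"] boundaries_diff[OF _ assms, of "z - y"] by auto
  then show ?thesis
    by (simp add: hclass_eq)
qed

lemma diff_cdiff_cycle:
  assumes "a \<in> cycles A n" "b \<in> topspace (ctop A (n - 1))"
  shows "a - cdiff A (n - 1) b \<in> cycles A n"
  using assms cdiff_closed'[OF assms(2)] ab_topgroup_diff[OF ab_topgroup_ctop]
  by (simp add: cycles_eq cdiff_diff cdiff_cdiff')

lemma hclass_saturation:
  assumes "C \<subseteq> cycles A n"
  shows "{z \<in> cycles A n. hclass A n z \<in> hclass A n ` C}
    = (\<lambda>(a, b). a - cdiff A (n - 1) b) ` (C \<times> topspace (ctop A (n - 1)))"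
proof
  show "{z \<in> cycles A n. hclass A n z \<in> hclass A n ` C}
      \<subseteq> (\<lambda>(a, b). a - cdiff A (n - 1) b) ` (C \<times> topspace (ctop A (n - 1)))"
  proof clarify
    fix z a assume z: "z \<in> cycles A n" and a: "a \<in> C" "hclass A n z = hclass A n a"
    have "z \<in> hclass A n z"
      using z boundaries_zero by (simp add: hclass_eq)
    then have "z - a \<in> boundaries A n"
      unfolding a(2) by (simp add: hclass_eq)
    then obtain b where b: "b \<in> topspace (ctop A (n - 1))" "z - a = cdiff A (n - 1) b"
      by (auto simp: boundaries_def)
    then have "z = a - cdiff A (n - 1) (- b)"
      by (simp add: cdiff_uminus algebra_simps)
    then show "z \<in> (\<lambda>(a, b). a - cdiff A (n - 1) b) ` (C \<times> topspace (ctop A (n - 1)))"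
      using a(1) ab_topgroup_uminus[OF ab_topgroup_ctop b(1)] by force
  qed
  show "(\<lambda>(a, b). a - cdiff A (n - 1) b) ` (C \<times> topspace (ctop A (n - 1)))
      \<subseteq> {z \<in> cycles A n. hclass A n z \<in> hclass A n ` C}"
  proof clarify
    fix a b assume a: "a \<in> C" and b: "b \<in> topspace (ctop A (n - 1))"
    have "hclass A n (a - cdiff A (n - 1) b) = hclass A n a"
    proof (rule hclass_eqI)
      have "a - cdiff A (n - 1) b - a = cdiff A (n - 1) (- b)"
        using b by (simp add: cdiff_uminus)
      then show "a - cdiff A (n - 1) b - a \<in> boundaries A n"
        using ab_topgroup_uminus[OF ab_topgroup_ctop b] by (simp add: boundaries_def)
    qed
    then show "a - cdiff A (n - 1) b \<in> cycles A n \<and> hclass A n (a - cdiff A (n - 1) b) \<in> hclass A n ` C"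
      using diff_cdiff_cycle[OF _ b] a assms by auto
  qed
qed

end

definition locally_split :: "'x::ab_group_add tcomplex \<Rightarrow> (int \<Rightarrow> 'x set) \<Rightarrow> bool" where
  "locally_split A S \<longleftrightarrow> (\<forall>n N U. openin (ctop A (n - 1)) N \<and> 0 \<in> N \<and> openin (ctop A n) U \<and> 0 \<in> U
     \<longrightarrow> (\<exists>B. openin (ctop A n) B \<and> 0 \<in> B \<and>
           (\<forall>x\<in>B. cdiff A n x \<in> S (n + 1) \<longrightarrow> (\<exists>u\<in>N. \<exists>s\<in>S n \<inter> U. x = cdiff A (n - 1) u + s))))"

lemma locally_splitD:
  assumes "locally_split A S" "openin (ctop A (n - 1)) N" "0 \<in> N" "openin (ctop A n) U" "0 \<in> U"
  obtains B where "openin (ctop A n) B" "0 \<in> B"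
    "\<And>x. x \<in> B \<Longrightarrow> cdiff A n x \<in> S (n + 1) \<Longrightarrow> \<exists>u\<in>N. \<exists>s\<in>S n \<inter> U. x = cdiff A (n - 1) u + s"
  using assms unfolding locally_split_def by meson

locale subcomplex = topological_complex A for A :: "'x::ab_group_add tcomplex" +
  fixes S :: "int \<Rightarrow> 'x set"
  assumes subset_topspace: "S n \<subseteq> topspace (ctop A n)"
    and zero_mem: "0 \<in> S n"
    and add_mem: "x \<in> S n \<Longrightarrow> y \<in> S n \<Longrightarrow> x + y \<in> S n"
    and uminus_mem: "x \<in> S n \<Longrightarrow> - x \<in> S n"
    and cdiff_mem: "x \<in> S n \<Longrightarrow> cdiff A n x \<in> S (n + 1)"
begin

lemma locally_split_at:
  assumes split: "locally_split A S"
    and V: "openin (ctop A (n - 1)) V" "b \<in> V" and U: "openin (ctop A n) U" "a \<in> U"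
  obtains B where "openin (ctop A n) B" "0 \<in> B"
    "\<And>x. x \<in> B \<Longrightarrow> cdiff A n x \<in> S (n + 1) \<Longrightarrow>
       \<exists>a'\<in>U. \<exists>b'\<in>V. a' - a \<in> S n \<and> x + (a - cdiff A (n - 1) b) = a' - cdiff A (n - 1) b'"
proof -
  have a: "a \<in> topspace (ctop A n)" and b: "b \<in> topspace (ctop A (n - 1))"
    using U V openin_subset by blast+
  define N where "N = {u \<in> topspace (ctop A (n - 1)). b - u \<in> V}"
  define U' where "U' = {s \<in> topspace (ctop A n). s + a \<in> U}"
  have N: "openin (ctop A (n - 1)) N" "0 \<in> N"
    using openin_ab_topgroup_reflect[OF ab_topgroup_ctop V(1) b] V(2) ab_topgroup_zero[OF ab_topgroup_ctop]
    by (simp_all add: N_def)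
  have U': "openin (ctop A n) U'" "0 \<in> U'"
    using openin_ab_topgroup_translate[OF ab_topgroup_ctop U(1) a] U(2) ab_topgroup_zero[OF ab_topgroup_ctop]
    by (simp_all add: U'_def)
  obtain B where B: "openin (ctop A n) B" "0 \<in> B"
    "\<And>x. x \<in> B \<Longrightarrow> cdiff A n x \<in> S (n + 1) \<Longrightarrow> \<exists>u\<in>N. \<exists>s\<in>S n \<inter> U'. x = cdiff A (n - 1) u + s"
    using locally_splitD[OF split N U'] by blast
  show thesis
  proof (rule that[OF B(1,2)])
    fix x assume "x \<in> B" "cdiff A n x \<in> S (n + 1)"
    then have "\<exists>u\<in>N. \<exists>s\<in>S n \<inter> U'. x = cdiff A (n - 1) u + s"
      by (rule B(3))
    then obtain u s where u: "u \<in> topspace (ctop A (n - 1))" "b - u \<in> V"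
      and s: "s \<in> S n" "s + a \<in> U" and x: "x = cdiff A (n - 1) u + s"
      by (auto simp: N_def U'_def)
    have "x + (a - cdiff A (n - 1) b) = (s + a) - cdiff A (n - 1) (b - u)"
      unfolding x cdiff_diff[OF b u(1)] by (simp add: algebra_simps)
    moreover have "(s + a) - a \<in> S n"
      using s(1) by simp
    ultimately show "\<exists>a'\<in>U. \<exists>b'\<in>V. a' - a \<in> S n \<and> x + (a - cdiff A (n - 1) b) = a' - cdiff A (n - 1) b'"
      using s(2) u(2) by blast
  qed
qed

lemma diff_mem: "x \<in> S n \<Longrightarrow> y \<in> S n \<Longrightarrow> x - y \<in> S n"
  using add_mem[OF _ uminus_mem] by (metis diff_conv_add_uminus)

abbreviation sub :: "'x tcomplex" where
  "sub \<equiv> A\<lparr>ctop := \<lambda>n. subtopology (ctop A n) (S n)\<rparr>"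

abbreviation quot :: "'x set tcomplex" where
  "quot \<equiv> quotient_complex A S"

lemma cycles_sub: "cycles sub n = {x \<in> S n. cdiff A n x = 0}"
  using subset_topspace by (auto simp: cycles_def czero_eq)

lemma cycles_top_sub: "cycles_top sub n = subtopology (ctop A n) (cycles sub n)"
  by (simp add: cycles_top_def subtopology_subtopology cycles_sub Int_absorb1)

lemma boundaries_sub: "boundaries sub n = cdiff A (n - 1) ` S (n - 1)"
  using subset_topspace by (simp add: boundaries_def Int_absorb1)

lemma qcoset_eq: "qcoset A S n x = {y \<in> topspace (ctop A n). y - x \<in> S n}"
  by (simp add: qcoset_def cadd_eq cneg_eq)

lemma qcoset_eq_iff:
  assumes "x \<in> topspace (ctop A n)"
  shows "qcoset A S n x = qcoset A S n y \<longleftrightarrow> x - y \<in> S n"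
proof
  assume "qcoset A S n x = qcoset A S n y"
  then show "x - y \<in> S n"
    using assms zero_mem by (auto simp: qcoset_eq)
next
  assume xy: "x - y \<in> S n"
  have "z - x \<in> S n \<longleftrightarrow> z - y \<in> S n" for z
    using add_mem[OF _ xy, of "z - x"] diff_mem[OF _ xy, of "z - y"] by auto
  then show "qcoset A S n x = qcoset A S n y"
    by (simp add: qcoset_eq)
qed

lemma some_qcoset:
  assumes "x \<in> topspace (ctop A n)"
  obtains x' where "(SOME z. z \<in> qcoset A S n x) = x'" "x' \<in> topspace (ctop A n)" "x' - x \<in> S n"
proof -
  have "x \<in> qcoset A S n x"
    using assms zero_mem by (simp add: qcoset_eq)
  then show thesis
    by (metis (mono_tags, lifting) mem_Collect_eq qcoset_eq someI_ex that)
qed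

lemma ctop_quot: "ctop quot n = quotient_topology (ctop A n) (qcoset A S n)"
  by (simp add: quotient_complex_def)

lemma czero_quot: "czero quot n = qcoset A S n 0"
  by (simp add: quotient_complex_def czero_eq)

lemma cadd_quot:
  assumes "x \<in> topspace (ctop A n)" "y \<in> topspace (ctop A n)"
  shows "cadd quot n (qcoset A S n x) (qcoset A S n y) = qcoset A S n (x + y)"
proof -
  obtain x' y' where x': "(SOME z. z \<in> qcoset A S n x) = x'" "x' \<in> topspace (ctop A n)" "x' - x \<in> S n"
    and y': "(SOME z. z \<in> qcoset A S n y) = y'" "y' \<in> topspace (ctop A n)" "y' - y \<in> S n"
    using some_qcoset[OF assms(1)] some_qcoset[OF assms(2)] by metis
  have eq: "(x' + y') - (x + y) = (x' - x) + (y' - y)"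
    by (simp add: algebra_simps)
  have "cadd quot n (qcoset A S n x) (qcoset A S n y) = qcoset A S n (x' + y')"
    using x'(1) y'(1) by (simp add: quotient_complex_def cadd_eq)
  also have "\<dots> = qcoset A S n (x + y)"
    unfolding qcoset_eq_iff[OF ab_topgroup_add[OF ab_topgroup_ctop x'(2) y'(2)]] eq
    by (rule add_mem[OF x'(3) y'(3)])
  finally show ?thesis .
qed

lemma cneg_quot:
  assumes "x \<in> topspace (ctop A n)"
  shows "cneg quot n (qcoset A S n x) = qcoset A S n (- x)"
proof -
  obtain x' where x': "(SOME z. z \<in> qcoset A S n x) = x'" "x' \<in> topspace (ctop A n)" "x' - x \<in> S n"
    using some_qcoset[OF assms] by metis
  have eq: "- x' - - x = - (x' - x)"
    by simp
  have "cneg quot n (qcoset A S n x) = qcoset A S n (- x')"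
    using x'(1) by (simp add: quotient_complex_def cneg_eq)
  also have "\<dots> = qcoset A S n (- x)"
    unfolding qcoset_eq_iff[OF ab_topgroup_uminus[OF ab_topgroup_ctop x'(2)]] eq
    by (rule uminus_mem[OF x'(3)])
  finally show ?thesis .
qed

lemma cdiff_quot:
  assumes "x \<in> topspace (ctop A n)"
  shows "cdiff quot n (qcoset A S n x) = qcoset A S (n + 1) (cdiff A n x)"
proof -
  obtain x' where "(SOME z. z \<in> qcoset A S n x) = x'" "x' \<in> topspace (ctop A n)" "x' - x \<in> S n"
    using some_qcoset[OF assms] by metis
  then show ?thesis
    using cdiff_mem[of "x' - x" n] cdiff_closed
    by (simp add: quotient_complex_def qcoset_eq_iff cdiff_diff assms)
qed

lemma topspace_quot: "topspace (ctop quot n) = qcoset A S n ` topspace (ctop A n)"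
  by (simp add: ctop_quot topspace_quotient_topology)

lemma cycles_quot:
  assumes "x \<in> topspace (ctop A n)"
  shows "qcoset A S n x \<in> cycles quot n \<longleftrightarrow> cdiff A n x \<in> S (n + 1)"
  using assms cdiff_closed[OF assms] imageI[OF assms, of "qcoset A S n"]
  by (simp add: cycles_def topspace_quot cdiff_quot czero_quot qcoset_eq_iff)

lemma open_map_qcoset: "open_map (ctop A n) (ctop quot n) (qcoset A S n)"
  unfolding open_map_def
proof (intro allI impI)
  fix W assume W: "openin (ctop A n) W"
  have iff: "qcoset A S n y \<in> qcoset A S n ` W \<longleftrightarrow> (\<exists>s\<in>S n. y - s \<in> W)"
    if y: "y \<in> topspace (ctop A n)" for y
  proof
    assume "qcoset A S n y \<in> qcoset A S n ` W"
    then obtain w where "w \<in> W" "qcoset A S n y = qcoset A S n w"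
      by auto
    then show "\<exists>s\<in>S n. y - s \<in> W"
      using y by (intro bexI[of _ "y - w"]) (simp_all add: qcoset_eq_iff)
  next
    assume "\<exists>s\<in>S n. y - s \<in> W"
    then obtain s where "s \<in> S n" "y - s \<in> W"
      by blast
    then show "qcoset A S n y \<in> qcoset A S n ` W"
      using y by (intro image_eqI[of _ _ "y - s"]) (simp_all add: qcoset_eq_iff)
  qed
  have "{y \<in> topspace (ctop A n). qcoset A S n y \<in> qcoset A S n ` W}
      = {y \<in> topspace (ctop A n). \<exists>s\<in>S n. y - s \<in> W}"
    by (rule Collect_cong) (use iff in blast)
  then have "openin (ctop A n) {y \<in> topspace (ctop A n). qcoset A S n y \<in> qcoset A S n ` W}"
    using open_map_coset[OF ab_topgroup_ctop subset_topspace uminus_mem W] by simp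
  moreover have "qcoset A S n ` W \<subseteq> qcoset A S n ` topspace (ctop A n)"
    using openin_subset[OF W] by (rule image_mono)
  ultimately show "openin (ctop quot n) (qcoset A S n ` W)"
    by (simp add: ctop_quot openin_quotient_topology)
qed

lemma zero_quotient_map_qcoset:
  assumes b: "b \<in> topspace (ctop A (n - 1))"
  shows "cadd quot n (czero quot n) (cneg quot n (cdiff quot (n - 1) (qcoset A S (n - 1) b)))
    = qcoset A S n (- cdiff A (n - 1) b)"
proof -
  have Db: "cdiff A (n - 1) b \<in> topspace (ctop A n)"
    using cdiff_closed'[OF b] .
  then have "cneg quot n (cdiff quot (n - 1) (qcoset A S (n - 1) b)) = qcoset A S n (- cdiff A (n - 1) b)"
    using cdiff_quot[OF b] cneg_quot[OF Db] by simp
  then show ?thesis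
    using cadd_quot[OF ab_topgroup_zero ab_topgroup_uminus[OF _ Db], OF ab_topgroup_ctop ab_topgroup_ctop]
    by (simp add: czero_quot)
qed

lemma locally_split_cycles_at:
  assumes split: "locally_split A S"
    and a: "a \<in> cycles sub n" "openin (ctop A n) U" "a \<in> U"
    and b: "openin (ctop A (n - 1)) V" "b \<in> V"
  obtains B where "openin (ctop A n) B" "0 \<in> B"
    "\<And>z. z \<in> cycles A n \<Longrightarrow> z - (a - cdiff A (n - 1) b) \<in> B \<Longrightarrow>
       \<exists>a'\<in>U \<inter> cycles sub n. \<exists>b'\<in>V. z = a' - cdiff A (n - 1) b'"
proof -
  obtain B where B: "openin (ctop A n) B" "0 \<in> B"
    "\<And>x. x \<in> B \<Longrightarrow> cdiff A n x \<in> S (n + 1) \<Longrightarrow>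
       \<exists>a'\<in>U. \<exists>b'\<in>V. a' - a \<in> S n \<and> x + (a - cdiff A (n - 1) b) = a' - cdiff A (n - 1) b'"
    using locally_split_at[OF split b a(2,3)] by blast
  have a_S: "a \<in> S n" and a_cycle: "a \<in> cycles A n"
    using a(1) subset_topspace by (auto simp: cycles_sub cycles_eq)
  have w: "a - cdiff A (n - 1) b \<in> cycles A n"
    using diff_cdiff_cycle[OF a_cycle] b openin_subset by blast
  show thesis
  proof (rule that[OF B(1,2)])
    fix z assume z: "z \<in> cycles A n" "z - (a - cdiff A (n - 1) b) \<in> B"
    have "cdiff A n (z - (a - cdiff A (n - 1) b)) = 0"
      using z(1) w by (simp add: cycles_eq cdiff_diff)
    then obtain a' b' where a': "a' \<in> U" "a' - a \<in> S n" and b': "b' \<in> V"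
      and z_eq: "z = a' - cdiff A (n - 1) b'"
      using B(3)[OF z(2)] zero_mem by auto
    have "a' \<in> S n"
      using add_mem[OF a'(2) a_S] by simp
    moreover have "cdiff A n a' = 0"
    proof -
      have b'_top: "b' \<in> topspace (ctop A (n - 1))"
        using b' b(1) openin_subset by blast
      have "a' = z + cdiff A (n - 1) b'"
        using z_eq by simp
      then show ?thesis
        using z(1) cdiff_closed'[OF b'_top] cdiff_cdiff'[OF b'_top] by (simp add: cycles_eq cdiff_add)
    qed
    ultimately show "\<exists>a'\<in>U \<inter> cycles sub n. \<exists>b'\<in>V. z = a' - cdiff A (n - 1) b'"
      using a'(1) b' z_eq by (auto simp: cycles_sub)
  qed
qed

lemma quasi_open_inclusion:
  assumes split: "locally_split A S"
  shows "quasi_open sub A (\<lambda>n x. x)"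
  unfolding quasi_open_def
proof (intro allI open_map_prod_topologyI)
  fix n a b U V
  assume U: "openin (cycles_top sub n) U" "a \<in> U" and V: "openin (ctop A (n - 1)) V" "b \<in> V"
  define F where "F = (\<lambda>(a, b). cadd A n a (cneg A n (cdiff A (n - 1) b)))"
  have F: "F (a', b') = a' - cdiff A (n - 1) b'" for a' b'
    by (simp add: F_def cadd_eq cneg_eq)
  obtain U0 where U0: "openin (ctop A n) U0" "U = U0 \<inter> cycles sub n"
    using U(1) by (auto simp: cycles_top_sub openin_subtopology)
  have a: "a \<in> cycles sub n" "a \<in> U0"
    using U(2) U0(2) by auto
  obtain B where B: "openin (ctop A n) B" "0 \<in> B"
    "\<And>z. z \<in> cycles A n \<Longrightarrow> z - (a - cdiff A (n - 1) b) \<in> B \<Longrightarrow>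
       \<exists>a'\<in>U0 \<inter> cycles sub n. \<exists>b'\<in>V. z = a' - cdiff A (n - 1) b'"
    using locally_split_cycles_at[OF split a(1) U0(1) a(2) V] by blast
  define w where "w = a - cdiff A (n - 1) b"
  have "a \<in> cycles A n" "b \<in> topspace (ctop A (n - 1))"
    using a(1) subset_topspace openin_subset[OF V(1)] V(2) by (auto simp: cycles_sub cycles_eq)
  then have w_cycle: "w \<in> cycles A n"
    unfolding w_def by (rule diff_cdiff_cycle)
  then have w_top: "w \<in> topspace (ctop A n)"
    by (simp add: cycles_eq)
  define W where "W = cycles A n \<inter> {z \<in> topspace (ctop A n). z + - w \<in> B}"
  have "openin (cycles_top A n) W"
    unfolding W_def cycles_top_def
    using openin_ab_topgroup_translate[OF ab_topgroup_ctop B(1) ab_topgroup_uminus[OF ab_topgroup_ctop w_top]]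
    by (rule openin_subtopology_Int2)
  moreover have "F (a, b) \<in> W"
    using w_cycle w_top B(2) by (simp add: W_def F w_def[symmetric])
  moreover have "W \<subseteq> F ` (U \<times> V)"
  proof
    fix z assume "z \<in> W"
    then have "z \<in> cycles A n" "z - w \<in> B"
      by (simp_all add: W_def)
    then have "z \<in> cycles A n" "z - (a - cdiff A (n - 1) b) \<in> B"
      unfolding w_def .
    then obtain a' b' where "a' \<in> U0 \<inter> cycles sub n" "b' \<in> V" "z = a' - cdiff A (n - 1) b'"
      using B(3) by blast
    then show "z \<in> F ` (U \<times> V)"
      using U0(2) by (force simp: F)
  qed
  ultimately show "\<exists>W. openin (cycles_top A n) W \<and> F (a, b) \<in> W \<and> W \<subseteq> F ` (U \<times> V)"
    by blast
qed

lemma locally_split_quotient_at: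
  assumes split: "locally_split A S" and V: "openin (ctop A (n - 1)) V" "b \<in> V"
  obtains W where "openin (ctop A n) W" "- cdiff A (n - 1) b \<in> W"
    "\<And>z. z \<in> W \<Longrightarrow> cdiff A n z \<in> S (n + 1) \<Longrightarrow>
       \<exists>b'\<in>V. qcoset A S n z = qcoset A S n (- cdiff A (n - 1) b')"
proof -
  have b: "b \<in> topspace (ctop A (n - 1))"
    using V openin_subset by blast
  have Db: "cdiff A (n - 1) b \<in> topspace (ctop A n)"
    using cdiff_closed'[OF b] .
  obtain B where B: "openin (ctop A n) B" "0 \<in> B"
    "\<And>x. x \<in> B \<Longrightarrow> cdiff A n x \<in> S (n + 1) \<Longrightarrow>
       \<exists>a'\<in>topspace (ctop A n). \<exists>b'\<in>V. a' - 0 \<in> S n \<and> x + (0 - cdiff A (n - 1) b) = a' - cdiff A (n - 1) b'"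
    using locally_split_at[OF split V openin_topspace ab_topgroup_zero[OF ab_topgroup_ctop]] by blast
  define W where "W = {z \<in> topspace (ctop A n). z + cdiff A (n - 1) b \<in> B}"
  have "openin (ctop A n) W"
    unfolding W_def using B(1) Db by (rule openin_ab_topgroup_translate[OF ab_topgroup_ctop])
  moreover have "- cdiff A (n - 1) b \<in> W"
    using B(2) ab_topgroup_uminus[OF ab_topgroup_ctop Db] by (simp add: W_def)
  ultimately show thesis
  proof (rule that)
    fix z assume z: "z \<in> W" "cdiff A n z \<in> S (n + 1)"
    have z_top: "z \<in> topspace (ctop A n)"
      using z(1) by (simp add: W_def)
    have "z + cdiff A (n - 1) b \<in> B"
      using z(1) by (simp add: W_def)
    moreover have "cdiff A n (z + cdiff A (n - 1) b) \<in> S (n + 1)"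
      using cdiff_add[OF z_top Db] cdiff_cdiff'[OF b] z(2) by simp
    ultimately obtain a' b' where "a' \<in> S n" "b' \<in> V"
      "z + cdiff A (n - 1) b + (0 - cdiff A (n - 1) b) = a' - cdiff A (n - 1) b'"
      using B(3) by force
    then have "a' \<in> S n" "b' \<in> V" "z - - cdiff A (n - 1) b' = a'"
      by (simp_all add: algebra_simps)
    then show "\<exists>b'\<in>V. qcoset A S n z = qcoset A S n (- cdiff A (n - 1) b')"
      using z_top by (auto simp: qcoset_eq_iff)
  qed
qed

lemma quasi_open_zero_quotient:
  assumes split: "locally_split A S"
  shows "quasi_open zero_complex quot (\<lambda>n x. czero quot n)"
  unfolding quasi_open_def
proof (intro allI open_map_prod_topologyI)
  fix n e c U V
  assume U: "openin (cycles_top zero_complex n) U" "e \<in> U"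
    and V: "openin (ctop quot (n - 1)) V" "c \<in> V"
  define g where "g = (\<lambda>(e :: unit, c). cadd quot n ((\<lambda>n x. czero quot n) n e) (cneg quot n (cdiff quot (n - 1) c)))"
  have g: "g (e', qcoset A S (n - 1) b') = qcoset A S n (- cdiff A (n - 1) b')"
    if "b' \<in> topspace (ctop A (n - 1))" for e' b'
    using zero_quotient_map_qcoset[OF that] by (simp add: g_def)
  have "c \<in> topspace (ctop quot (n - 1))"
    using V openin_subset by blast
  then obtain b where b: "b \<in> topspace (ctop A (n - 1))" "c = qcoset A S (n - 1) b"
    by (auto simp: topspace_quot)
  define V' where "V' = {y \<in> topspace (ctop A (n - 1)). qcoset A S (n - 1) y \<in> V}"
  have V': "openin (ctop A (n - 1)) V'" "b \<in> V'"
    using V b by (simp_all add: V'_def ctop_quot openin_quotient_topology)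
  obtain W0 where W0: "openin (ctop A n) W0" "- cdiff A (n - 1) b \<in> W0"
    "\<And>z. z \<in> W0 \<Longrightarrow> cdiff A n z \<in> S (n + 1) \<Longrightarrow>
       \<exists>b'\<in>V'. qcoset A S n z = qcoset A S n (- cdiff A (n - 1) b')"
    using locally_split_quotient_at[OF split V'] by blast
  define W where "W = qcoset A S n ` W0 \<inter> cycles quot n"
  have "openin (cycles_top quot n) W"
    unfolding W_def cycles_top_def
    using open_map_qcoset W0(1) unfolding open_map_def by (blast intro: openin_subtopology_Int)
  moreover have "g (e, c) \<in> W"
  proof -
    have Db: "cdiff A (n - 1) b \<in> topspace (ctop A n)"
      using cdiff_closed'[OF b(1)] .
    have "cdiff A n (- cdiff A (n - 1) b) \<in> S (n + 1)"
      using zero_mem by (simp add: cdiff_uminus[OF Db] cdiff_cdiff'[OF b(1)])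
    then show ?thesis
      using b g W0(2) cycles_quot[OF ab_topgroup_uminus[OF ab_topgroup_ctop Db]] by (simp add: W_def)
  qed
  moreover have "W \<subseteq> g ` (U \<times> V)"
  proof
    fix w assume "w \<in> W"
    then obtain z where z: "z \<in> W0" "w = qcoset A S n z" "w \<in> cycles quot n"
      by (auto simp: W_def)
    have "cdiff A n z \<in> S (n + 1)"
      using z cycles_quot W0(1) openin_subset by blast
    then obtain b' where "b' \<in> V'" "w = qcoset A S n (- cdiff A (n - 1) b')"
      using W0(3)[OF z(1)] z(2) by blast
    then show "w \<in> g ` (U \<times> V)"
      using U(2) g by (force simp: V'_def)
  qed
  ultimately show "\<exists>W. openin (cycles_top quot n) W \<and> g (e, c) \<in> W \<and> W \<subseteq> g ` (U \<times> V)"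
    by blast
qed

lemma topspace_cycles_top: "topspace (cycles_top B n) = cycles B n"
  by (auto simp: cycles_top_def cycles_def)

lemma hclass_sub: "hclass sub n x = {y \<in> cycles sub n. y - x \<in> boundaries sub n}"
  by (simp add: hclass_def cadd_eq cneg_eq)

lemma coh_map_inclusion_hclass:
  assumes "a \<in> cycles sub n"
  shows "coh_map A (\<lambda>n x. x) n (hclass sub n a) = hclass A n a"
proof -
  have "0 \<in> boundaries sub n"
    using zero_mem cdiff_zero by (auto simp: boundaries_sub intro!: image_eqI[of _ _ 0])
  then have "a \<in> hclass sub n a"
    using assms by (simp add: hclass_sub)
  then have "(SOME x. x \<in> hclass sub n a) \<in> hclass sub n a"
    by (rule someI)
  then have "(SOME x. x \<in> hclass sub n a) - a \<in> boundaries A n"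
    using subset_topspace by (auto simp: hclass_sub boundaries_sub boundaries_def)
  then show ?thesis
    unfolding coh_map_def by (rule hclass_eqI)
qed

lemma open_map_cohomology_inclusion:
  assumes qo: "quasi_open sub A (\<lambda>n x. x)"
  shows "open_map (coh_top sub n) (coh_top A n) (coh_map A (\<lambda>n x. x) n)"
  unfolding open_map_def
proof (intro allI impI)
  fix H assume H: "openin (coh_top sub n) H"
  define C where "C = {x \<in> cycles sub n. hclass sub n x \<in> H}"
  have C: "openin (cycles_top sub n) C" and H_sub: "H \<subseteq> hclass sub n ` cycles sub n"
    using H by (simp_all add: coh_top_def openin_quotient_topology topspace_cycles_top C_def)
  have C_cycles: "C \<subseteq> cycles A n"
    using subset_topspace by (auto simp: C_def cycles_sub cycles_eq)
  have image: "coh_map A (\<lambda>n x. x) n ` H = hclass A n ` C"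
    using H_sub coh_map_inclusion_hclass by (force simp: C_def)
  have "openin (prod_topology (cycles_top sub n) (ctop A (n - 1))) (C \<times> topspace (ctop A (n - 1)))"
    using C by (simp add: openin_prod_Times_iff)
  then have "openin (cycles_top A n) ((\<lambda>(a, b). a - cdiff A (n - 1) b) ` (C \<times> topspace (ctop A (n - 1))))"
    using qo by (simp add: quasi_open_def open_map_def cadd_eq cneg_eq)
  moreover have "hclass A n ` C \<subseteq> hclass A n ` cycles A n"
    using C_cycles by (rule image_mono)
  ultimately show "openin (coh_top A n) (coh_map A (\<lambda>n x. x) n ` H)"
    by (simp add: image coh_top_def openin_quotient_topology topspace_cycles_top hclass_saturation[OF C_cycles])
qed

end

locale bicomplex =
  fixes T :: "nat \<Rightarrow> nat \<Rightarrow> 'a::ab_group_add topology"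
    and d' d'' :: "nat \<Rightarrow> nat \<Rightarrow> 'a \<Rightarrow> 'a"
  assumes double_complex: "double_complex T d' d''"
begin

lemma ab_topgroup_T: "ab_topgroup (T p q)"
  using double_complex by (simp add: double_complex_def ab_topgroup_def)

lemma continuous_map_d': "continuous_map (T p q) (T (Suc p) q) (d' p q)"
  and continuous_map_d'': "continuous_map (T p q) (T p (Suc q)) (d'' p q)"
  using double_complex by (simp_all add: double_complex_def)

lemma d'_closed: "x \<in> topspace (T p q) \<Longrightarrow> d' p q x \<in> topspace (T (Suc p) q)"
  using continuous_map_d'[of p q] by (auto simp: continuous_map_def Pi_iff)

lemma d''_closed: "x \<in> topspace (T p q) \<Longrightarrow> d'' p q x \<in> topspace (T p (Suc q))"
  using continuous_map_d''[of p q] by (auto simp: continuous_map_def Pi_iff)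

lemma d'_add: "x \<in> topspace (T p q) \<Longrightarrow> y \<in> topspace (T p q) \<Longrightarrow> d' p q (x + y) = d' p q x + d' p q y"
  and d''_add: "x \<in> topspace (T p q) \<Longrightarrow> y \<in> topspace (T p q) \<Longrightarrow> d'' p q (x + y) = d'' p q x + d'' p q y"
  and d'_d': "x \<in> topspace (T p q) \<Longrightarrow> d' (Suc p) q (d' p q x) = 0"
  and d''_d'': "x \<in> topspace (T p q) \<Longrightarrow> d'' p (Suc q) (d'' p q x) = 0"
  and d'_d''_anticommute: "x \<in> topspace (T p q) \<Longrightarrow> d' p (Suc q) (d'' p q x) + d'' (Suc p) q (d' p q x) = 0"
  using double_complex by (simp_all add: double_complex_def)

lemma d'_zero [simp]: "d' p q 0 = 0"
  using d'_add[OF ab_topgroup_zero ab_topgroup_zero, OF ab_topgroup_T ab_topgroup_T] by simp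

lemma d''_zero [simp]: "d'' p q 0 = 0"
  using d''_add[OF ab_topgroup_zero ab_topgroup_zero, OF ab_topgroup_T ab_topgroup_T] by simp

abbreviation K :: "(nat \<Rightarrow> 'a) tcomplex" where
  "K \<equiv> total_complex T d' d''"

abbreviation S :: "int \<Rightarrow> (nat \<Rightarrow> 'a) set" where
  "S \<equiv> KI_set T d' d''"

definition component_top :: "int \<Rightarrow> nat \<Rightarrow> 'a topology" where
  "component_top n p = (if int p \<le> n then T p (nat (n - int p)) else discrete_topology {0})"

lemma ctop_total: "ctop K n = product_topology (component_top n) UNIV"
  by (simp add: total_complex_def component_top_def[abs_def])

lemma ab_topgroup_component_top: "ab_topgroup (component_top n p)"
  by (simp add: component_top_def ab_topgroup_T ab_topgroup_discrete_zero)

lemma ab_topgroup_total: "ab_topgroup (ctop K n)"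
  unfolding ctop_total by (rule ab_topgroup_product[OF ab_topgroup_component_top])

lemma component_top_nat: "component_top (int m) p = (if p \<le> m then T p (m - p) else discrete_topology {0})"
  by (simp add: component_top_def nat_diff_distrib)

lemma component_top_Suc:
  "component_top (int (Suc m)) (Suc p) = (if p \<le> m then T (Suc p) (m - p) else discrete_topology {0})"
  by (simp only: component_top_nat) simp

lemma topspace_total_nat:
  "x \<in> topspace (ctop K (int m)) \<longleftrightarrow> (\<forall>p\<le>m. x p \<in> topspace (T p (m - p))) \<and> (\<forall>p>m. x p = 0)"
proof -
  have "x \<in> topspace (ctop K (int m)) \<longleftrightarrow> (\<forall>p. x p \<in> topspace (component_top (int m) p))"
    by (simp add: ctop_total PiE_UNIV_domain Pi_iff)
  also have "\<dots> \<longleftrightarrow> (\<forall>p. (p \<le> m \<longrightarrow> x p \<in> topspace (T p (m - p))) \<and> (m < p \<longrightarrow> x p = 0))"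
  proof (rule iff_allI)
    fix p
    show "x p \<in> topspace (component_top (int m) p)
        \<longleftrightarrow> (p \<le> m \<longrightarrow> x p \<in> topspace (T p (m - p))) \<and> (m < p \<longrightarrow> x p = 0)"
      by (cases "p \<le> m") (simp_all add: component_top_nat)
  qed
  finally show ?thesis
    by blast
qed

lemma topspace_total_neg:
  assumes "n < 0"
  shows "topspace (ctop K n) = {0}"
proof -
  have "component_top n p = discrete_topology {0}" for p
    using assms by (simp add: component_top_def)
  then have "topspace (ctop K n) = {\<lambda>p\<in>UNIV. 0}"
    by (simp add: ctop_total)
  also have "\<dots> = {0}"
    by (simp add: fun_eq_iff)
  finally show ?thesis .
qed

lemma total_component:
  assumes "x \<in> topspace (ctop K (int m))"
  shows "x p \<in> topspace (T p (m - p))"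
proof (cases "p \<le> m")
  case True
  then show ?thesis
    using assms by (simp add: topspace_total_nat)
next
  case False
  then have "x p = 0"
    using assms by (simp add: topspace_total_nat)
  then show ?thesis
    using ab_topgroup_zero[OF ab_topgroup_T] by simp
qed

lemma cdiff_total_0:
  "cdiff K (int m) x 0 = d'' 0 m (x 0)"
  by (simp add: total_complex_def)

lemma cdiff_total_Suc:
  assumes x: "x \<in> topspace (ctop K (int m))"
  shows "cdiff K (int m) x (Suc p) = d' p (m - p) (x p) + d'' (Suc p) (m - Suc p) (x (Suc p))"
proof -
  have "nat (int m + 1 - int (Suc p)) = m - p" "nat (int m - int (Suc p)) = m - Suc p"
    by simp_all
  then have D: "cdiff K (int m) x (Suc p) = (if p \<le> m then d' p (m - p) (x p)
      + (if Suc p \<le> m then d'' (Suc p) (m - Suc p) (x (Suc p)) else 0) else 0)"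
    by (simp add: total_complex_def)
  consider "Suc p \<le> m" | "p = m" | "m < p"
    by linarith
  then show ?thesis
  proof cases
    case 1
    then show ?thesis by (simp add: D)
  next
    case 2
    then show ?thesis unfolding D using x by (simp add: topspace_total_nat)
  next
    case 3
    then show ?thesis unfolding D using x by (simp add: topspace_total_nat)
  qed
qed

lemma cdiff_total_zero: "cdiff K n 0 = 0"
  by (simp add: total_complex_def fun_eq_iff)

lemma continuous_map_total_component:
  "continuous_map (ctop K (int m)) (T p (m - p)) (\<lambda>x. x p)"
proof (cases "p \<le> m")
  case True
  have "continuous_map (ctop K (int m)) (component_top (int m) p) (\<lambda>x. x p)"
    unfolding ctop_total by (rule continuous_map_product_projection) simp
  with True show ?thesis
    by (simp add: component_top_nat)
next
  case False
  have "continuous_map (ctop K (int m)) (T p (m - p)) (\<lambda>x. 0)"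
    using ab_topgroup_zero[OF ab_topgroup_T] by simp
  then show ?thesis
    by (rule continuous_map_eq) (use False in \<open>simp add: topspace_total_nat\<close>)
qed

lemma continuous_map_cdiff_total_component:
  "continuous_map (ctop K (int m)) (component_top (int (Suc m)) k) (\<lambda>x. cdiff K (int m) x k)"
proof (cases k)
  case 0
  have "continuous_map (ctop K (int m)) (T 0 (Suc m)) (\<lambda>x. d'' 0 m (x 0))"
    using continuous_map_compose[OF continuous_map_total_component continuous_map_d'', of m 0]
    by (simp add: o_def)
  with 0 show ?thesis
    unfolding component_top_nat by (simp add: cdiff_total_0)
next
  case (Suc p)
  have d'_part: "continuous_map (ctop K (int m)) (T (Suc p) (m - p)) (\<lambda>x. d' p (m - p) (x p))"
    using continuous_map_compose[OF continuous_map_total_component continuous_map_d', of m p]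
    by (simp add: o_def)
  consider "p < m" | "p = m" | "m < p"
    by linarith
  then show ?thesis
  proof cases
    case 1
    then have "continuous_map (ctop K (int m)) (T (Suc p) (m - p))
        (\<lambda>x. d'' (Suc p) (m - Suc p) (x (Suc p)))"
      using continuous_map_compose[OF continuous_map_total_component continuous_map_d'', of m "Suc p"]
      by (simp add: o_def Suc_diff_Suc)
    with d'_part have "continuous_map (ctop K (int m)) (T (Suc p) (m - p))
        (\<lambda>x. d' p (m - p) (x p) + d'' (Suc p) (m - Suc p) (x (Suc p)))"
      by (rule continuous_map_ab_topgroup_add[OF ab_topgroup_T])
    then show ?thesis
      unfolding Suc component_top_Suc using 1
      by (auto simp: cdiff_total_Suc elim!: continuous_map_eq)
  next
    case 2
    then show ?thesis
      unfolding Suc component_top_Suc using d'_part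
      by (auto simp: cdiff_total_Suc topspace_total_nat elim!: continuous_map_eq)
  next
    case 3
    have "continuous_map (ctop K (int m)) (discrete_topology {0}) (\<lambda>x. 0)"
      by simp
    then have "continuous_map (ctop K (int m)) (discrete_topology {0}) (\<lambda>x. cdiff K (int m) x (Suc p))"
      by (rule continuous_map_eq) (use 3 in \<open>simp add: cdiff_total_Suc topspace_total_nat\<close>)
    then show ?thesis
      unfolding Suc component_top_Suc using 3 by simp
  qed
qed

lemma continuous_map_cdiff_total: "continuous_map (ctop K n) (ctop K (n + 1)) (cdiff K n)"
proof (cases "n < 0")
  case True
  have "continuous_map (ctop K n) (ctop K (n + 1)) (\<lambda>x. 0)"
    using ab_topgroup_zero[OF ab_topgroup_total] by simp
  then show ?thesis
    by (rule continuous_map_eq) (use True in \<open>simp add: topspace_total_neg cdiff_total_zero\<close>)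
next
  case False
  then obtain m where n: "n = int m"
    by (metis nonneg_int_cases not_less)
  have "continuous_map (ctop K (int m)) (ctop K (int (Suc m))) (cdiff K (int m))"
    unfolding ctop_total[of "int (Suc m)"] continuous_map_componentwise_UNIV
    using continuous_map_cdiff_total_component by blast
  then show ?thesis
    by (simp add: n add.commute)
qed

lemma cdiff_total_closed: "x \<in> topspace (ctop K n) \<Longrightarrow> cdiff K n x \<in> topspace (ctop K (n + 1))"
  using continuous_map_cdiff_total by (auto simp: continuous_map_def Pi_iff)

lemma cdiff_total_add_nat:
  assumes x: "x \<in> topspace (ctop K (int m))" and y: "y \<in> topspace (ctop K (int m))"
  shows "cdiff K (int m) (x + y) = cdiff K (int m) x + cdiff K (int m) y"
proof
  fix k
  have xy: "x + y \<in> topspace (ctop K (int m))"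
    using ab_topgroup_add[OF ab_topgroup_total x y] .
  show "cdiff K (int m) (x + y) k = (cdiff K (int m) x + cdiff K (int m) y) k"
  proof (cases k)
    case 0
    then show ?thesis
      using d''_add[OF total_component[OF x, of 0] total_component[OF y, of 0]]
      by (simp add: cdiff_total_0)
  next
    case (Suc p)
    then show ?thesis
      using d'_add[OF total_component[OF x] total_component[OF y]]
        d''_add[OF total_component[OF x] total_component[OF y]]
      by (simp add: cdiff_total_Suc[OF x] cdiff_total_Suc[OF y] cdiff_total_Suc[OF xy] algebra_simps)
  qed
qed

lemma d'_cdiff_total:
  assumes x: "x \<in> topspace (ctop K (int m))" and "p \<le> m"
  shows "d' p (Suc (m - p)) (cdiff K (int m) x p) = d' p (Suc (m - p)) (d'' p (m - p) (x p))"
proof (cases p)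
  case 0
  then show ?thesis
    by (simp add: cdiff_total_0)
next
  case (Suc r)
  have xr: "x r \<in> topspace (T r (Suc (m - p)))"
    using total_component[OF x, of r] Suc \<open>p \<le> m\<close> by (simp add: Suc_diff_Suc)
  have "cdiff K (int m) x p = d' r (Suc (m - p)) (x r) + d'' p (m - p) (x p)"
    using cdiff_total_Suc[OF x, of r] Suc \<open>p \<le> m\<close> by (simp add: Suc_diff_Suc)
  moreover have "d' r (Suc (m - p)) (x r) \<in> topspace (T p (Suc (m - p)))"
    using d'_closed[OF xr] Suc by simp
  moreover have "d' p (Suc (m - p)) (d' r (Suc (m - p)) (x r)) = 0"
    using d'_d'[OF xr] Suc by simp
  ultimately show ?thesis
    using d'_add[OF _ d''_closed[OF total_component[OF x, of p]]] by simp
qed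

lemma d''_cdiff_total:
  assumes x: "x \<in> topspace (ctop K (int m))" and "p \<le> m"
  shows "d'' (Suc p) (m - p) (cdiff K (int m) x (Suc p)) = d'' (Suc p) (m - p) (d' p (m - p) (x p))"
proof (cases "p = m")
  case True
  then show ?thesis
    using x by (simp add: cdiff_total_Suc topspace_total_nat)
next
  case False
  then have mp: "m - p = Suc (m - Suc p)"
    using \<open>p \<le> m\<close> by simp
  have xp: "x p \<in> topspace (T p (Suc (m - Suc p)))"
    using total_component[OF x, of p] mp by simp
  show ?thesis
    using mp d''_add[OF d'_closed[OF xp] d''_closed[OF total_component[OF x, of "Suc p"]]]
      d''_d''[OF total_component[OF x, of "Suc p"]]
    by (simp add: cdiff_total_Suc[OF x])
qed

lemma cdiff_cdiff_total_nat:
  assumes x: "x \<in> topspace (ctop K (int m))"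
  shows "cdiff K (int (Suc m)) (cdiff K (int m) x) = 0"
proof
  fix k
  define y where "y = cdiff K (int m) x"
  have y: "y \<in> topspace (ctop K (int (Suc m)))"
    using cdiff_total_closed[OF x] by (simp add: y_def add.commute)
  show "cdiff K (int (Suc m)) y k = 0 k"
  proof (cases k)
    case 0
    have "cdiff K (int (Suc m)) y 0 = d'' 0 (Suc m) (y 0)"
      by (rule cdiff_total_0)
    then show ?thesis
      using 0 d''_d''[OF total_component[OF x, of 0]] by (simp add: cdiff_total_0 y_def)
  next
    case (Suc p)
    then have "cdiff K (int (Suc m)) y k = d' p (Suc m - p) (y p) + d'' (Suc p) (m - p) (y (Suc p))"
      using cdiff_total_Suc[OF y, of p] by simp
    also have "\<dots> = 0"
    proof (cases "p \<le> m")
      case True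
      then show ?thesis
        using d'_cdiff_total[OF x True] d''_cdiff_total[OF x True]
          d'_d''_anticommute[OF total_component[OF x, of p]]
        by (simp add: y_def Suc_diff_le)
    next
      case False
      then obtain r where r: "p = Suc r" "m \<le> r"
        by (metis Suc_le_D not_less_eq_eq)
      then have "y (Suc p) = 0" "y p = d' r 0 (x r)"
        using x by (simp_all add: y_def cdiff_total_Suc topspace_total_nat)
      then show ?thesis
        using d'_d'[OF total_component[OF x, of r]] r False by simp
    qed
    finally show ?thesis
      by simp
  qed
qed

lemma int_cases_neg:
  obtains "n < 0" | m where "n = int m"
  by (metis nonneg_int_cases not_less)

lemma cdiff_total_add:
  assumes "x \<in> topspace (ctop K n)" "y \<in> topspace (ctop K n)"
  shows "cdiff K n (x + y) = cdiff K n x + cdiff K n y"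
proof (cases n rule: int_cases_neg)
  case 1
  then show ?thesis
    using assms by (simp add: topspace_total_neg cdiff_total_zero)
next
  case (2 m)
  then show ?thesis
    using assms cdiff_total_add_nat by simp
qed

lemma cdiff_cdiff_total:
  assumes "x \<in> topspace (ctop K n)"
  shows "cdiff K (n + 1) (cdiff K n x) = 0"
proof (cases n rule: int_cases_neg)
  case 1
  then show ?thesis
    using assms by (simp add: topspace_total_neg cdiff_total_zero)
next
  case (2 m)
  then show ?thesis
    using assms cdiff_cdiff_total_nat[of x m] by (simp add: add.commute)
qed

lemma d''_uminus:
  assumes "x \<in> topspace (T p q)"
  shows "d'' p q (- x) = - d'' p q x"
proof -
  have "d'' p q x + d'' p q (- x) = 0"
    using d''_add[OF assms ab_topgroup_uminus[OF ab_topgroup_T assms]] by simp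
  then show ?thesis
    by (simp add: add_eq_0_iff)
qed

lemma KI_set_nat:
  "x \<in> S (int m) \<longleftrightarrow> x \<in> topspace (ctop K (int m)) \<and> (\<forall>p. p \<noteq> m \<longrightarrow> x p = 0) \<and> d'' m 0 (x m) = 0"
  using total_component[of x m m] by (auto simp: KI_set_def ZII_def)

lemma KI_set_neg: "n < 0 \<Longrightarrow> S n = {0}"
  using ab_topgroup_zero[OF ab_topgroup_total] by (auto simp: KI_set_def topspace_total_neg)

lemma zero_KI_set: "0 \<in> S n"
  using ab_topgroup_zero[OF ab_topgroup_total] ab_topgroup_zero[OF ab_topgroup_T]
  by (simp add: KI_set_def ZII_def)

lemma cdiff_KI_set:
  assumes x: "x \<in> S n"
  shows "cdiff K n x \<in> S (n + 1)"
proof (cases n rule: int_cases_neg)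
  case 1
  then show ?thesis
    using x by (simp add: KI_set_neg cdiff_total_zero zero_KI_set)
next
  case (2 m)
  have x_top: "x \<in> topspace (ctop K (int m))" and x0: "\<And>p. p \<noteq> m \<Longrightarrow> x p = 0"
    and x_closed: "d'' m 0 (x m) = 0"
    using x 2 by (simp_all add: KI_set_nat)
  have "cdiff K (int m) x k = 0" if "k \<noteq> Suc m" for k
  proof (cases k)
    case 0
    then show ?thesis
      using cdiff_total_0[of m x] x0[of 0] x_closed by (cases m) simp_all
  next
    case (Suc p)
    then have "p \<noteq> m"
      using that by simp
    then show ?thesis
      using Suc x0[of p] x0[of "Suc p"] x_closed cdiff_total_Suc[OF x_top, of p]
      by (cases "Suc p = m") auto
  qed
  moreover have "d'' (Suc m) 0 (cdiff K (int m) x (Suc m)) = 0"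
    using d'_d''_anticommute[OF total_component[OF x_top, of m]] x_closed x0[of "Suc m"]
    by (simp add: cdiff_total_Suc[OF x_top])
  ultimately have "cdiff K (int m) x \<in> S (int (Suc m))"
    unfolding KI_set_nat using cdiff_total_closed[OF x_top] by (simp add: add.commute)
  then show ?thesis
    using 2 by (simp add: add.commute)
qed

sublocale total: subcomplex K S
proof unfold_locales
  show "ab_topgroup (ctop K n)" for n
    by (rule ab_topgroup_total)
  show "cadd K n = (+)" "cneg K n = uminus" "czero K n = 0" for n
    by (simp_all add: total_complex_def fun_eq_iff)
  show "x \<in> topspace (ctop K n) \<Longrightarrow> cdiff K n x \<in> topspace (ctop K (n + 1))" for x n
    by (rule cdiff_total_closed)
  show "x \<in> topspace (ctop K n) \<Longrightarrow> y \<in> topspace (ctop K n) \<Longrightarrow> cdiff K n (x + y) = cdiff K n x + cdiff K n y"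
    for x y n
    by (rule cdiff_total_add)
  show "x \<in> topspace (ctop K n) \<Longrightarrow> cdiff K (n + 1) (cdiff K n x) = 0" for x n
    by (rule cdiff_cdiff_total)
  show "S n \<subseteq> topspace (ctop K n)" for n
    by (auto simp: KI_set_def)
  show "0 \<in> S n" for n
    by (rule zero_KI_set)
  show "x \<in> S n \<Longrightarrow> y \<in> S n \<Longrightarrow> x + y \<in> S n" for x y n
    using ab_topgroup_add[OF ab_topgroup_total] ab_topgroup_add[OF ab_topgroup_T]
    by (auto simp: KI_set_def ZII_def d''_add)
  show "x \<in> S n \<Longrightarrow> - x \<in> S n" for x n
    using ab_topgroup_uminus[OF ab_topgroup_total] ab_topgroup_uminus[OF ab_topgroup_T]
    by (auto simp: KI_set_def ZII_def d''_uminus)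
  show "x \<in> S n \<Longrightarrow> cdiff K n x \<in> S (n + 1)" for x n
    by (rule cdiff_KI_set)
qed

lemma fun_upd_zero: "(0::nat \<Rightarrow> 'a)(j := 0) = 0"
  by (simp add: fun_eq_iff)

lemma single_column_total:
  assumes "j \<le> k" "v \<in> topspace (T j (k - j))"
  shows "0(j := v) \<in> topspace (ctop K (int k))"
  using assms ab_topgroup_zero[OF ab_topgroup_T] by (auto simp: topspace_total_nat)

lemma continuous_map_single_column:
  assumes "j \<le> k"
  shows "continuous_map (T j (k - j)) (ctop K (int k)) (\<lambda>v. 0(j := v))"
  unfolding ctop_total continuous_map_componentwise_UNIV
proof
  fix p
  show "continuous_map (T j (k - j)) (component_top (int k) p) (\<lambda>v. (0(j := v)) p)"
  proof (cases "p = j")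
    case True
    then show ?thesis
      using assms by (simp add: component_top_nat)
  next
    case False
    then show ?thesis
      using ab_topgroup_zero[OF ab_topgroup_component_top] by simp
  qed
qed

lemma cdiff_single_column:
  assumes "j \<le> k" "v \<in> topspace (T j (k - j))" "p \<le> j"
  shows "cdiff K (int k) (0(j := v)) p = (if p = j then d'' j (k - j) v else 0)"
proof (cases p)
  case 0
  then show ?thesis
    by (simp add: cdiff_total_0)
next
  case (Suc r)
  then show ?thesis
    using assms cdiff_total_Suc[OF single_column_total[OF assms(1,2)], of r] by simp
qed

lemma cdiff_total_lowest_column:
  assumes "x \<in> topspace (ctop K (int m))" "\<And>p. p < j \<Longrightarrow> x p = 0"
  shows "cdiff K (int m) x j = d'' j (m - j) (x j)"
proof (cases j)
  case 0
  then show ?thesis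
    by (simp add: cdiff_total_0)
next
  case (Suc r)
  then show ?thesis
    using assms cdiff_total_Suc[OF assms(1), of r] by simp
qed

definition column_split :: "nat \<Rightarrow> nat \<Rightarrow> bool" where
  "column_split m j \<longleftrightarrow> (\<forall>N U. openin (ctop K (int m - 1)) N \<and> 0 \<in> N \<and> openin (ctop K (int m)) U \<and> 0 \<in> U
     \<longrightarrow> (\<exists>B. openin (ctop K (int m)) B \<and> 0 \<in> B \<and>
           (\<forall>x\<in>B. (\<forall>p<j. x p = 0) \<longrightarrow> cdiff K (int m) x \<in> S (int m + 1)
              \<longrightarrow> (\<exists>u\<in>N. \<exists>s\<in>S (int m) \<inter> U. x = cdiff K (int m - 1) u + s))))"

lemma column_split_top: "column_split m m"
  unfolding column_split_def
proof (intro allI impI)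
  fix N U
  assume NU: "openin (ctop K (int m - 1)) N \<and> 0 \<in> N \<and> openin (ctop K (int m)) U \<and> 0 \<in> U"
  have x_mem: "x \<in> S (int m)"
    if "x \<in> U" "\<forall>p<m. x p = 0" "cdiff K (int m) x \<in> S (int m + 1)" for x
  proof -
    have x: "x \<in> topspace (ctop K (int m))"
      using that(1) NU openin_subset by blast
    have "cdiff K (int m) x \<in> S (int (Suc m))"
      using that(3) by (simp add: add.commute)
    then have "cdiff K (int m) x m = 0"
      unfolding KI_set_nat by simp
    then have "d'' m 0 (x m) = 0"
      using cdiff_total_lowest_column[OF x, of m] that(2) by simp
    moreover have "x p = 0" if "p \<noteq> m" for p
      using x \<open>\<forall>p<m. x p = 0\<close> that by (cases "p < m") (auto simp: topspace_total_nat)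
    ultimately show ?thesis
      using x by (simp add: KI_set_nat)
  qed
  then show "\<exists>B. openin (ctop K (int m)) B \<and> 0 \<in> B \<and>
      (\<forall>x\<in>B. (\<forall>p<m. x p = 0) \<longrightarrow> cdiff K (int m) x \<in> S (int m + 1)
         \<longrightarrow> (\<exists>u\<in>N. \<exists>s\<in>S (int m) \<inter> U. x = cdiff K (int m - 1) u + s))"
  proof (intro exI[of _ U] conjI ballI impI)
    fix x assume "x \<in> U" "\<forall>p<m. x p = 0" "cdiff K (int m) x \<in> S (int m + 1)"
    then have "x \<in> S (int m) \<inter> U" "x = cdiff K (int m - 1) 0 + x"
      using x_mem by (simp_all add: cdiff_total_zero)
    then show "\<exists>u\<in>N. \<exists>s\<in>S (int m) \<inter> U. x = cdiff K (int m - 1) u + s"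
      using NU by blast
  qed (use NU in auto)
qed

lemma lift_column:
  assumes d''_open: "\<And>p q. open_map (T p q) (subtopology (T p (Suc q)) (ZII T d'' p (Suc q))) (d'' p q)"
    and jk: "j \<le> k"
    and N: "openin (ctop K (int k)) N" "0 \<in> N"
    and A: "openin (ctop K (int (Suc k))) A" "0 \<in> A"
  obtains W where "openin (T j (Suc (k - j))) W" "0 \<in> W"
    "\<forall>y\<in>W. d'' j (Suc (k - j)) y = 0 \<longrightarrow>
       (\<exists>v\<in>topspace (T j (k - j)). 0(j := v) \<in> N \<and> cdiff K (int k) (0(j := v)) \<in> A \<and> y = d'' j (k - j) v)"
proof -
  define V where "V = {v \<in> topspace (T j (k - j)). 0(j := v) \<in> N \<and> cdiff K (int k) (0(j := v)) \<in> A}"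
  have e: "continuous_map (T j (k - j)) (ctop K (int k)) (\<lambda>v. 0(j := v))"
    using continuous_map_single_column[OF jk] .
  have De: "continuous_map (T j (k - j)) (ctop K (int (Suc k))) (\<lambda>v. cdiff K (int k) (0(j := v)))"
    using continuous_map_compose[OF e continuous_map_cdiff_total] by (simp add: o_def add.commute)
  have "V = {v \<in> topspace (T j (k - j)). 0(j := v) \<in> N}
      \<inter> {v \<in> topspace (T j (k - j)). cdiff K (int k) (0(j := v)) \<in> A}"
    by (auto simp: V_def)
  then have "openin (T j (k - j)) V"
    using openin_Int[OF openin_continuous_map_preimage[OF e N(1)] openin_continuous_map_preimage[OF De A(1)]]
    by (simp only:)
  then have "openin (subtopology (T j (Suc (k - j))) (ZII T d'' j (Suc (k - j)))) (d'' j (k - j) ` V)"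
    using d''_open by (simp add: open_map_def)
  then obtain W where W: "openin (T j (Suc (k - j))) W" "d'' j (k - j) ` V = W \<inter> ZII T d'' j (Suc (k - j))"
    by (auto simp: openin_subtopology)
  have "0 \<in> V"
    using N(2) A(2) ab_topgroup_zero[OF ab_topgroup_T] by (simp add: V_def cdiff_total_zero fun_upd_zero)
  then have "d'' j (k - j) 0 \<in> d'' j (k - j) ` V"
    by (rule imageI)
  then have "0 \<in> W"
    using W(2) by simp
  moreover have "\<forall>y\<in>W. d'' j (Suc (k - j)) y = 0 \<longrightarrow>
       (\<exists>v\<in>topspace (T j (k - j)). 0(j := v) \<in> N \<and> cdiff K (int k) (0(j := v)) \<in> A \<and> y = d'' j (k - j) v)"
  proof (intro ballI impI)
    fix y assume y: "y \<in> W" "d'' j (Suc (k - j)) y = 0"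
    have "y \<in> ZII T d'' j (Suc (k - j))"
      using y openin_subset[OF W(1)] by (auto simp: ZII_def)
    then have "y \<in> d'' j (k - j) ` V"
      using W(2) y(1) by blast
    then show "\<exists>v\<in>topspace (T j (k - j)). 0(j := v) \<in> N \<and> cdiff K (int k) (0(j := v)) \<in> A \<and> y = d'' j (k - j) v"
      by (auto simp: V_def)
  qed
  ultimately show thesis
    by (rule that[OF W(1)])
qed

lemma column_splitD:
  assumes "column_split m j" "openin (ctop K (int m - 1)) N" "0 \<in> N" "openin (ctop K (int m)) U" "0 \<in> U"
  obtains B where "openin (ctop K (int m)) B" "0 \<in> B"
    "\<forall>x\<in>B. (\<forall>p<j. x p = 0) \<longrightarrow> cdiff K (int m) x \<in> S (int m + 1)
       \<longrightarrow> (\<exists>u\<in>N. \<exists>s\<in>S (int m) \<inter> U. x = cdiff K (int m - 1) u + s)"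
proof -
  have "openin (ctop K (int m - 1)) N \<and> 0 \<in> N \<and> openin (ctop K (int m)) U \<and> 0 \<in> U"
    using assms(2-5) by blast
  from assms(1)[unfolded column_split_def, rule_format, OF this] that show thesis
    by blast
qed

lemma column_split_step:
  assumes d''_open: "\<And>p q. open_map (T p q) (subtopology (T p (Suc q)) (ZII T d'' p (Suc q))) (d'' p q)"
    and "j < m" and split: "column_split m (Suc j)"
  shows "column_split m j"
proof -
  obtain k where m: "m = Suc k"
    using \<open>j < m\<close> by (cases m) auto
  have jk: "j \<le> k"
    using \<open>j < m\<close> m by simp
  have km: "int m - 1 = int k"
    using m by simp
  show ?thesis
    unfolding column_split_def km
  proof (intro allI impI)
    fix N U
    assume "openin (ctop K (int k)) N \<and> 0 \<in> N \<and> openin (ctop K (int m)) U \<and> 0 \<in> U"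
    then have N: "openin (ctop K (int k)) N" "0 \<in> N" and U: "openin (ctop K (int m)) U" "0 \<in> U"
      by blast+
    obtain N0 where N0: "openin (ctop K (int k)) N0" "0 \<in> N0"
      "\<And>u v. u \<in> N0 \<Longrightarrow> v \<in> N0 \<Longrightarrow> u + v \<in> N \<and> u - v \<in> N"
      using ab_topgroup_small_nbhd[OF ab_topgroup_total N] by blast
    have N0'': "openin (ctop K (int m - 1)) N0"
      using N0(1) km by simp
    obtain B1 where B1: "openin (ctop K (int m)) B1" "0 \<in> B1"
      "\<forall>x\<in>B1. (\<forall>p<Suc j. x p = 0) \<longrightarrow> cdiff K (int m) x \<in> S (int m + 1)
         \<longrightarrow> (\<exists>u\<in>N0. \<exists>s\<in>S (int m) \<inter> U. x = cdiff K (int m - 1) u + s)"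
      using split N0'' N0(2) U by (rule column_splitD)
    obtain A where A: "openin (ctop K (int m)) A" "0 \<in> A"
      "\<And>x y. x \<in> A \<Longrightarrow> y \<in> A \<Longrightarrow> x + y \<in> B1 \<and> x - y \<in> B1"
      using ab_topgroup_small_nbhd[OF ab_topgroup_total B1(1,2)] by blast
    have A': "openin (ctop K (int (Suc k))) A"
      using A(1) unfolding m .
    obtain W where W: "openin (T j (Suc (k - j))) W" "0 \<in> W"
      "\<forall>y\<in>W. d'' j (Suc (k - j)) y = 0 \<longrightarrow>
         (\<exists>v\<in>topspace (T j (k - j)). 0(j := v) \<in> N0 \<and> cdiff K (int k) (0(j := v)) \<in> A \<and> y = d'' j (k - j) v)"
      using d''_open jk N0(1,2) A' A(2) by (rule lift_column)
    have mj: "m - j = Suc (k - j)"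
      using m jk by simp
    define B where "B = A \<inter> {x \<in> topspace (ctop K (int m)). x j \<in> W}"
    have "openin (ctop K (int m)) {x \<in> topspace (ctop K (int m)). x j \<in> W}"
      using openin_continuous_map_preimage[OF continuous_map_total_component W(1)[folded mj]] by simp
    then have "openin (ctop K (int m)) B"
      using openin_Int[OF A(1)] by (simp add: B_def)
    moreover have "0 \<in> B"
      using A(2) W(2) ab_topgroup_zero[OF ab_topgroup_total] by (simp add: B_def)
    moreover have "\<exists>u\<in>N. \<exists>s\<in>S (int m) \<inter> U. x = cdiff K (int k) u + s"
      if x: "x \<in> B" and low: "\<forall>p<j. x p = 0" and Dx: "cdiff K (int m) x \<in> S (int m + 1)" for x
    proof -
      have x_top: "x \<in> topspace (ctop K (int m))"
        using x by (simp add: B_def)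
      have "cdiff K (int m) x \<in> S (int (Suc m))"
        using Dx by (simp add: add.commute)
      then have "cdiff K (int m) x j = 0"
        unfolding KI_set_nat using \<open>j < m\<close> by simp
      then have "d'' j (Suc (k - j)) (x j) = 0"
        using cdiff_total_lowest_column[OF x_top, of j] low mj by simp
      then obtain v where v: "v \<in> topspace (T j (k - j))" "0(j := v) \<in> N0"
        "cdiff K (int k) (0(j := v)) \<in> A" "x j = d'' j (k - j) v"
        using W(3) x by (auto simp: B_def)
      define e where "e = 0(j := v)"
      have e_top: "e \<in> topspace (ctop K (int k))"
        unfolding e_def using single_column_total[OF jk v(1)] .
      have De_top: "cdiff K (int k) e \<in> topspace (ctop K (int m))"
        using cdiff_total_closed[OF e_top] m by (simp add: add.commute)
      define x' where "x' = x - cdiff K (int k) e"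
      have x'_B1: "x' \<in> B1"
        using A(3)[of x "cdiff K (int k) e"] x v(3) by (simp add: B_def x'_def e_def)
      have x'_low: "\<forall>p<Suc j. x' p = 0"
        using low v(4) cdiff_single_column[OF jk v(1)] by (auto simp: x'_def e_def less_Suc_eq)
      have "cdiff K (int m) x' = cdiff K (int m) x"
        using total.cdiff_diff[OF x_top De_top] cdiff_cdiff_total_nat[OF e_top] m by (simp add: x'_def)
      then have "\<exists>u\<in>N0. \<exists>s\<in>S (int m) \<inter> U. x' = cdiff K (int k) u + s"
        using B1(3) x'_B1 x'_low Dx km by simp
      then obtain u1 s where u1: "u1 \<in> N0" and s: "s \<in> S (int m) \<inter> U"
        and x': "x' = cdiff K (int k) u1 + s"
        by blast
      have u1_top: "u1 \<in> topspace (ctop K (int k))"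
        using u1 N0(1) openin_subset by blast
      have "x = cdiff K (int k) e + x'"
        by (simp add: x'_def)
      also have "\<dots> = cdiff K (int k) (e + u1) + s"
        unfolding x' total.cdiff_add[OF e_top u1_top] by (rule add.assoc[symmetric])
      finally have "x = cdiff K (int k) (e + u1) + s" .
      moreover have "e + u1 \<in> N"
        using N0(3)[OF _ u1] v(2) by (simp add: e_def)
      ultimately show ?thesis
        using s by blast
    qed
    ultimately show "\<exists>B. openin (ctop K (int m)) B \<and> 0 \<in> B \<and>
        (\<forall>x\<in>B. (\<forall>p<j. x p = 0) \<longrightarrow> cdiff K (int m) x \<in> S (int m + 1)
           \<longrightarrow> (\<exists>u\<in>N. \<exists>s\<in>S (int m) \<inter> U. x = cdiff K (int k) u + s))"
      by (intro exI[of _ B] conjI ballI impI)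
  qed
qed

lemma locally_split_total:
  assumes d''_open: "\<And>p q. open_map (T p q) (subtopology (T p (Suc q)) (ZII T d'' p (Suc q))) (d'' p q)"
  shows "locally_split K S"
  unfolding locally_split_def
proof (intro allI impI)
  fix n N U
  assume NU: "openin (ctop K (n - 1)) N \<and> 0 \<in> N \<and> openin (ctop K n) U \<and> 0 \<in> U"
  show "\<exists>B. openin (ctop K n) B \<and> 0 \<in> B \<and>
      (\<forall>x\<in>B. cdiff K n x \<in> S (n + 1) \<longrightarrow> (\<exists>u\<in>N. \<exists>s\<in>S n \<inter> U. x = cdiff K (n - 1) u + s))"
  proof (cases n rule: int_cases_neg)
    case 1
    have "\<exists>u\<in>N. \<exists>s\<in>S n \<inter> U. x = cdiff K (n - 1) u + s" if "x \<in> topspace (ctop K n)" for x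
    proof -
      have "x = cdiff K (n - 1) 0 + 0" "0 \<in> S n \<inter> U"
        using that 1 NU zero_KI_set by (simp_all add: topspace_total_neg cdiff_total_zero)
      then show ?thesis
        using NU by blast
    qed
    then show ?thesis
      using ab_topgroup_zero[OF ab_topgroup_total] by (intro exI[of _ "topspace (ctop K n)"]) auto
  next
    case (2 m)
    have "column_split m j" if "j \<le> m" for j
      using that
    proof (induction j rule: inc_induct)
      case base
      show ?case
        by (rule column_split_top)
    next
      case (step j)
      then show ?case
        using column_split_step[OF d''_open] by blast
    qed
    then have "column_split m 0"
      by simp
    moreover have "openin (ctop K (int m - 1)) N" "0 \<in> N" "openin (ctop K (int m)) U" "0 \<in> U"
      using NU 2 by simp_all
    ultimately obtain B where "openin (ctop K (int m)) B" "0 \<in> B"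
      "\<forall>x\<in>B. (\<forall>p<0. x p = 0) \<longrightarrow> cdiff K (int m) x \<in> S (int m + 1)
         \<longrightarrow> (\<exists>u\<in>N. \<exists>s\<in>S (int m) \<inter> U. x = cdiff K (int m - 1) u + s)"
      by (rule column_splitD)
    then show ?thesis
      using 2 by auto
  qed
qed

end

theorem proposition2p4:
  fixes T :: "nat \<Rightarrow> nat \<Rightarrow> 'a::ab_group_add topology"
    and d' d'' :: "nat \<Rightarrow> nat \<Rightarrow> 'a \<Rightarrow> 'a"
  assumes dc: "double_complex T d' d''"
    and d''_open: "\<And>p q. open_map (T p q) (subtopology (T p (Suc q)) (ZII T d'' p (Suc q))) (d'' p q)"
  shows "quasi_open zero_complex
           (quotient_complex (total_complex T d' d'') (KI_set T d' d''))
           (\<lambda>n x. czero (quotient_complex (total_complex T d' d'') (KI_set T d' d'')) n)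
       \<and> quasi_open (KI_complex T d' d'') (total_complex T d' d'') (\<lambda>n x. x)
       \<and> (\<forall>n\<ge>0.
           open_map (coh_top (KI_complex T d' d'') n) (coh_top (total_complex T d' d'') n)
             (coh_map (total_complex T d' d'') (\<lambda>n x. x) n))"
proof -
  interpret bicomplex T d' d''
    by (rule bicomplex.intro[OF dc])
  have split: "locally_split K S"
    by (rule locally_split_total[OF d''_open])
  have inclusion: "quasi_open (KI_complex T d' d'') K (\<lambda>n x. x)"
    unfolding KI_complex_def by (rule total.quasi_open_inclusion[OF split])
  show ?thesis
    using total.quasi_open_zero_quotient[OF split] inclusion
      total.open_map_cohomology_inclusion[OF inclusion[unfolded KI_complex_def]]
    by (simp add: KI_complex_def)
qed

end
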